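(* Let $R_1,\dots,R_k$ be norms on $\mathbb{R}^p$, $\theta_1^*,\dots,\theta_k^*\in\mathbb{R}^p$, and $\mathcal{C}_i=\operatorname{cone}\{\Delta: R_i(\theta_i^*+\Delta)\le R_i(\theta_i^* )\}$. Let $$\mathcal{H}=\Big\{\sum_{i=1}^k\Delta_i:\Delta_i\in\mathcal{C}_i,\ \sum_{i=1}^k\|\Delta_i\|_2=1\Big\},\qquad \mathcal{A}=\Big(\sum_{i=1}^k\mathcal{C}_i\Big)\cap S^{p-1}.$$ Suppose the structural coherence condition holds with constant $\rho>0$, i.e. $\|\sum_{i=1}^k\Delta_i\|_2\ge\rho\sum_{i=1}^k\|\Delta_i\|_2$ for all $\Delta_i\in\mathcal{C}_i$. Then for every random vector $Z\in\mathbb{R}^p$ and every $\xi>0$, $$Q_{\rho\xi}(\mathcal{H};Z)\ \ge\ Q_\xi(\mathcal{A};Z).$$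
   Context: $\operatorname{cone}(E)$ is the smallest closed cone containing $E$; $S^{p-1}$ is the Euclidean unit sphere. For a set $E\subseteq\mathbb{R}^p$ and random vector $Z$, the marginal tail function is $Q_\xi(E;Z)=\inf_{u\in E}P(|\langle Z,u\rangle|\ge\xi)$. *)

theory Defs
  imports "HOL-Analysis.Analysis" "HOL-Probability.Probability"
begin

definition is_norm :: "('a::real_vector \<Rightarrow> real) \<Rightarrow> bool" where
  "is_norm R \<longleftrightarrow> (\<forall>x. 0 \<le> R x) \<and> (\<forall>x. R x = 0 \<longleftrightarrow> x = 0)
     \<and> (\<forall>x y. R (x + y) \<le> R x + R y) \<and> (\<forall>c x. R (c *\<^sub>R x) = \<bar>c\<bar> * R x)"

definition closed_cone_of :: "'a::real_normed_vector set \<Rightarrow> 'a set" where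
  "closed_cone_of E = \<Inter>{C. cone C \<and> closed C \<and> E \<subseteq> C}"

text \<open>Marginal tail function; infimum taken in the extended reals (empty infimum = top).\<close>
definition marginal_tail ::
  "real \<Rightarrow> 'a::euclidean_space set \<Rightarrow> 'w measure \<Rightarrow> ('w \<Rightarrow> 'a) \<Rightarrow> ereal" where
  "marginal_tail \<xi> E M Z = (INF u\<in>E. ereal (measure M {\<omega> \<in> space M. \<xi> \<le> \<bar>Z \<omega> \<bullet> u\<bar>}))"

end

theory Submission
  imports Defs
begin

text \<open>Every h in H has norm at least \<rho> by coherence, and h / norm h lies in A because the
  cones are closed under positive scaling. Hence each event |\<langle>Z, h/norm h\<rangle>| \<ge> \<xi> is contained
  in the event |\<langle>Z, h\<rangle>| \<ge> \<rho>\<xi>, and the infimum over H dominates the infimum over A.\<close>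

lemma cone_closed_cone_of: "cone (closed_cone_of E)"
  unfolding closed_cone_of_def cone_def by blast

lemma tail_event_subset_dilation:
  fixes Z :: "'w \<Rightarrow> 'a::real_inner"
  assumes "0 \<le> \<rho>" "\<rho> \<le> c" "0 \<le> \<xi>"
  shows "{\<omega> \<in> S. \<xi> \<le> \<bar>Z \<omega> \<bullet> u\<bar>} \<subseteq> {\<omega> \<in> S. \<rho> * \<xi> \<le> \<bar>Z \<omega> \<bullet> (c *\<^sub>R u)\<bar>}"
proof safe
  fix \<omega> assume "\<xi> \<le> \<bar>Z \<omega> \<bullet> u\<bar>"
  then have "\<rho> * \<xi> \<le> c * \<bar>Z \<omega> \<bullet> u\<bar>"
    using assms by (intro mult_mono) auto
  also have "\<dots> = \<bar>Z \<omega> \<bullet> (c *\<^sub>R u)\<bar>"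
    using assms by (simp add: abs_mult)
  finally show "\<rho> * \<xi> \<le> \<bar>Z \<omega> \<bullet> (c *\<^sub>R u)\<bar>" .
qed

lemma marginal_tail_ge_of_dilations:
  assumes "prob_space M" "Z \<in> borel_measurable M" "0 \<le> \<rho>" "0 \<le> \<xi>"
    and dilation: "\<And>h. h \<in> H \<Longrightarrow> \<exists>u\<in>A. \<exists>c\<ge>\<rho>. h = c *\<^sub>R u"
  shows "marginal_tail \<xi> A M Z \<le> marginal_tail (\<rho> * \<xi>) H M Z"
  unfolding marginal_tail_def
proof (rule INF_greatest)
  interpret prob_space M by fact
  fix h assume "h \<in> H"
  then obtain u c where u: "u \<in> A" and c: "\<rho> \<le> c" and h: "h = c *\<^sub>R u"
    using dilation by blast
  have "{\<omega> \<in> space M. \<rho> * \<xi> \<le> \<bar>Z \<omega> \<bullet> h\<bar>} \<in> events"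
    using assms(2) by measurable
  then have "measure M {\<omega> \<in> space M. \<xi> \<le> \<bar>Z \<omega> \<bullet> u\<bar>}
      \<le> measure M {\<omega> \<in> space M. \<rho> * \<xi> \<le> \<bar>Z \<omega> \<bullet> h\<bar>}"
    unfolding h by (intro finite_measure_mono tail_event_subset_dilation) (use assms c in auto)
  then show "(INF u\<in>A. ereal (measure M {\<omega> \<in> space M. \<xi> \<le> \<bar>Z \<omega> \<bullet> u\<bar>}))
      \<le> ereal (measure M {\<omega> \<in> space M. \<rho> * \<xi> \<le> \<bar>Z \<omega> \<bullet> h\<bar>})"
    by (intro INF_lower2[OF u]) simp
qed

theorem lemma2:
  fixes k :: nat
    and R :: "nat \<Rightarrow> 'a::euclidean_space \<Rightarrow> real"
    and \<theta> :: "nat \<Rightarrow> 'a"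
    and C :: "nat \<Rightarrow> 'a set"
    and H A :: "'a set"
    and \<rho> :: real
  assumes norms: "\<forall>i<k. is_norm (R i)"
    and C_def: "\<forall>i<k. C i = closed_cone_of {\<Delta>. R i (\<theta> i + \<Delta>) \<le> R i (\<theta> i)}"
    and H_def: "H = {(\<Sum>i<k. \<Delta> i) | \<Delta>. (\<forall>i<k. \<Delta> i \<in> C i) \<and> (\<Sum>i<k. norm (\<Delta> i)) = 1}"
    and A_def: "A = {(\<Sum>i<k. \<Delta> i) | \<Delta>. \<forall>i<k. \<Delta> i \<in> C i} \<inter> sphere 0 1"
    and rho_pos: "\<rho> > 0"
    and coherence: "\<forall>\<Delta>. (\<forall>i<k. \<Delta> i \<in> C i) \<longrightarrow> norm (\<Sum>i<k. \<Delta> i) \<ge> \<rho> * (\<Sum>i<k. norm (\<Delta> i))"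
  shows "\<forall>(M :: 'w measure) (Z :: 'w \<Rightarrow> 'a) (\<xi>::real).
           prob_space M \<longrightarrow> Z \<in> borel_measurable M \<longrightarrow> \<xi> > 0 \<longrightarrow>
           marginal_tail (\<rho> * \<xi>) H M Z \<ge> marginal_tail \<xi> A M Z"
proof -
  have "\<exists>u\<in>A. \<exists>c\<ge>\<rho>. h = c *\<^sub>R u" if "h \<in> H" for h
  proof -
    obtain \<Delta> where \<Delta>: "\<forall>i<k. \<Delta> i \<in> C i" "(\<Sum>i<k. norm (\<Delta> i)) = 1" and h: "h = (\<Sum>i<k. \<Delta> i)"
      using \<open>h \<in> H\<close> H_def by blast
    have "\<rho> \<le> norm h"
      using coherence \<Delta> h by force
    then have pos: "0 < norm h"
      using rho_pos by linarith
    have "cone (C i)" if "i < k" for i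
      using C_def that cone_closed_cone_of by simp
    then have "\<forall>i<k. (1 / norm h) *\<^sub>R \<Delta> i \<in> C i"
      using \<Delta>(1) pos by (simp add: cone_def)
    moreover have "(1 / norm h) *\<^sub>R h = (\<Sum>i<k. (1 / norm h) *\<^sub>R \<Delta> i)"
      unfolding h by (simp add: scaleR_sum_right)
    moreover have "norm ((1 / norm h) *\<^sub>R h) = 1"
      using pos by simp
    ultimately have "(1 / norm h) *\<^sub>R h \<in> A"
      unfolding A_def by (intro IntI CollectI exI[of _ "\<lambda>i. (1 / norm h) *\<^sub>R \<Delta> i"]) auto
    moreover have "h = norm h *\<^sub>R ((1 / norm h) *\<^sub>R h)"
      using pos by simp
    ultimately show ?thesis
      using \<open>\<rho> \<le> norm h\<close> by blast
  qed
  then show ?thesis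
    using rho_pos by (auto intro!: marginal_tail_ge_of_dilations)
qed

end
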